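(* Let $x\in V(D^+)\setminus\{s\}$. For any $y\in C(x)$, $I_s(x)\preceq I_s(y)$.
   Context: $G=(V,E,w)$ is a simple, connected, undirected graph with positive edge lengths, $s,t\in V$. $D$ is the union of all shortest $st$-paths of $G$, and $D^+$ is the directed acyclic graph obtained from $D$ by orienting every edge toward $t$. For $x,y\in V(D^+)$, $x\prec y$ means $x$ is an ancestor of $y$ in $D^+$ (a directed path of positive length from $x$ to $y$ exists), and $x\preceq y$ means $x\prec y$ or $x=y$. For $x\neq s$, $v\neq x$ is an $s$-dominator of $x$ if every directed path from $s$ to $x$ in $D^+$ contains $v$, and $I_s(x)$ is the $s$-dominator of $x$ closest to $x$ (every other $s$-dominator of $x$ is an $s$-dominator of $I_s(x)$). For $x\neq s$, $C(x)=\{v\in V(D^+): I_s(x)\prec v\prec x\}$. *)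

theory Defs
  imports Complex_Main
begin

definition simple_graph :: "'a set \<Rightarrow> 'a set set \<Rightarrow> bool" where
  "simple_graph V E \<longleftrightarrow> finite V \<and> (\<forall>e\<in>E. e \<subseteq> V \<and> card e = 2)"

definition is_path :: "'a set \<Rightarrow> 'a set set \<Rightarrow> 'a list \<Rightarrow> bool" where
  "is_path V E xs \<longleftrightarrow> xs \<noteq> [] \<and> distinct xs \<and> set xs \<subseteq> V \<and>
     (\<forall>i. Suc i < length xs \<longrightarrow> {xs ! i, xs ! Suc i} \<in> E)"

definition connected_graph :: "'a set \<Rightarrow> 'a set set \<Rightarrow> bool" where
  "connected_graph V E \<longleftrightarrow>
     (\<forall>u\<in>V. \<forall>v\<in>V. \<exists>xs. is_path V E xs \<and> hd xs = u \<and> last xs = v)"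

definition path_len :: "('a set \<Rightarrow> real) \<Rightarrow> 'a list \<Rightarrow> real" where
  "path_len w xs = (\<Sum>i<length xs - 1. w {xs ! i, xs ! Suc i})"

definition shortest_path :: "'a set \<Rightarrow> 'a set set \<Rightarrow> ('a set \<Rightarrow> real) \<Rightarrow> 'a \<Rightarrow> 'a \<Rightarrow> 'a list \<Rightarrow> bool" where
  "shortest_path V E w s t xs \<longleftrightarrow> is_path V E xs \<and> hd xs = s \<and> last xs = t \<and>
     (\<forall>ys. is_path V E ys \<and> hd ys = s \<and> last ys = t \<longrightarrow> path_len w xs \<le> path_len w ys)"

definition DV :: "'a set \<Rightarrow> 'a set set \<Rightarrow> ('a set \<Rightarrow> real) \<Rightarrow> 'a \<Rightarrow> 'a \<Rightarrow> 'a set" where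
  "DV V E w s t = (\<Union>{set xs | xs. shortest_path V E w s t xs})"

text \<open>Arcs of D+: each edge of a shortest st-path, oriented in the direction of traversal
  from s towards t.\<close>
definition Darcs :: "'a set \<Rightarrow> 'a set set \<Rightarrow> ('a set \<Rightarrow> real) \<Rightarrow> 'a \<Rightarrow> 'a \<Rightarrow> ('a \<times> 'a) set" where
  "Darcs V E w s t = {(xs ! i, xs ! Suc i) | xs i. shortest_path V E w s t xs \<and> Suc i < length xs}"

definition anc :: "'a set \<Rightarrow> 'a set set \<Rightarrow> ('a set \<Rightarrow> real) \<Rightarrow> 'a \<Rightarrow> 'a \<Rightarrow> 'a \<Rightarrow> 'a \<Rightarrow> bool" where
  "anc V E w s t x y \<longleftrightarrow> (x, y) \<in> (Darcs V E w s t)\<^sup>+"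

definition anc_eq :: "'a set \<Rightarrow> 'a set set \<Rightarrow> ('a set \<Rightarrow> real) \<Rightarrow> 'a \<Rightarrow> 'a \<Rightarrow> 'a \<Rightarrow> 'a \<Rightarrow> bool" where
  "anc_eq V E w s t x y \<longleftrightarrow> anc V E w s t x y \<or> x = y"

definition dpath :: "'a set \<Rightarrow> 'a set set \<Rightarrow> ('a set \<Rightarrow> real) \<Rightarrow> 'a \<Rightarrow> 'a \<Rightarrow> 'a list \<Rightarrow> bool" where
  "dpath V E w s t ps \<longleftrightarrow> ps \<noteq> [] \<and> set ps \<subseteq> DV V E w s t \<and>
     (\<forall>i. Suc i < length ps \<longrightarrow> (ps ! i, ps ! Suc i) \<in> Darcs V E w s t)"

definition sdom :: "'a set \<Rightarrow> 'a set set \<Rightarrow> ('a set \<Rightarrow> real) \<Rightarrow> 'a \<Rightarrow> 'a \<Rightarrow> 'a \<Rightarrow> 'a \<Rightarrow> bool" where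
  "sdom V E w s t v x \<longleftrightarrow> v \<noteq> x \<and>
     (\<forall>ps. dpath V E w s t ps \<and> hd ps = s \<and> last ps = x \<longrightarrow> v \<in> set ps)"

definition Is :: "'a set \<Rightarrow> 'a set set \<Rightarrow> ('a set \<Rightarrow> real) \<Rightarrow> 'a \<Rightarrow> 'a \<Rightarrow> 'a \<Rightarrow> 'a" where
  "Is V E w s t x = (THE v. sdom V E w s t v x \<and>
      (\<forall>u. sdom V E w s t u x \<and> u \<noteq> v \<longrightarrow> sdom V E w s t u v))"

definition Cset :: "'a set \<Rightarrow> 'a set set \<Rightarrow> ('a set \<Rightarrow> real) \<Rightarrow> 'a \<Rightarrow> 'a \<Rightarrow> 'a \<Rightarrow> 'a set" where
  "Cset V E w s t x = {v \<in> DV V E w s t. anc V E w s t (Is V E w s t x) v \<and> anc V E w s t v x}"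

end

theory Submission
  imports Defs
begin

text \<open>D+ is acyclic: the weight of the initial segment of a shortest s-t path up to a vertex u
  depends only on u, and it strictly increases along every arc. Now let a = I_s(x) and
  a \<prec> y \<prec> x. An s-y path avoiding a, continued along a y-x path, would be an s-x path; since
  a \<prec> y, the continuation cannot pass through a without closing a cycle, so a dominates y.
  Hence a = I_s(y) or a dominates I_s(y), and in the latter case a occurs strictly before the end
  of an s-I_s(y) path, i.e. a \<prec> I_s(y).\<close>

lemma successively_append_Cons_iff:
  "successively P (xs @ y # ys) \<longleftrightarrow> successively P (xs @ [y]) \<and> successively P (y # ys)"
  by (auto simp: successively_append_iff successively_Cons)

definition dwalk :: "('a \<times> 'a) set \<Rightarrow> 'a set \<Rightarrow> 'a \<Rightarrow> 'a list \<Rightarrow> 'a \<Rightarrow> bool" where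
  "dwalk A D u P v \<longleftrightarrow>
     P \<noteq> [] \<and> set P \<subseteq> D \<and> successively (\<lambda>a b. (a, b) \<in> A) P \<and> hd P = u \<and> last P = v"

lemma dwalk_split:
  "dwalk A D u (P @ v # Q) x \<longleftrightarrow> dwalk A D u (P @ [v]) v \<and> dwalk A D v (v # Q) x"
  by (auto simp: dwalk_def successively_append_iff successively_Cons hd_append)

lemma dwalk_append:
  assumes "dwalk A D u P v" and "dwalk A D v (v # Q) x"
  shows "dwalk A D u (P @ Q) x"
proof -
  obtain P' where "P = P' @ [v]"
    using assms(1) unfolding dwalk_def by (metis append_butlast_last_id)
  then show ?thesis using assms dwalk_split[of A D u P' v Q x] by simp
qed

lemma dwalk_trancl:
  "dwalk A D u (u # P) v \<Longrightarrow> z \<in> set P \<Longrightarrow> (u, z) \<in> A\<^sup>+"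
proof (induction P arbitrary: u)
  case (Cons a P)
  then have "(u, a) \<in> A" and "dwalk A D a (a # P) v"
    by (auto simp: dwalk_def)
  with Cons show ?case by (cases "z = a") (auto intro: trancl_into_trancl2)
qed simp

lemma trancl_dwalk:
  assumes "(u, v) \<in> A\<^sup>+" and "A \<subseteq> D \<times> D"
  shows "\<exists>P. dwalk A D u (u # P) v"
  using assms(1)
proof (induction rule: trancl_induct)
  case (base v)
  then have "dwalk A D u [u, v] v" using assms(2) by (auto simp: dwalk_def)
  then show ?case by blast
next
  case (step v z)
  then obtain P where "dwalk A D u (u # P) v" by blast
  moreover have "dwalk A D v [v, z] z" using step.hyps(2) assms(2) by (auto simp: dwalk_def)
  ultimately show ?case using dwalk_append by fastforce
qed

definition dominates :: "('a \<times> 'a) set \<Rightarrow> 'a set \<Rightarrow> 'a \<Rightarrow> 'a \<Rightarrow> 'a \<Rightarrow> bool" where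
  "dominates A D s v x \<longleftrightarrow> v \<noteq> x \<and> (\<forall>P. dwalk A D s P x \<longrightarrow> v \<in> set P)"

definition idom :: "('a \<times> 'a) set \<Rightarrow> 'a set \<Rightarrow> 'a \<Rightarrow> 'a \<Rightarrow> 'a" where
  "idom A D s x = (THE v. dominates A D s v x \<and>
      (\<forall>u. dominates A D s u x \<and> u \<noteq> v \<longrightarrow> dominates A D s u v))"

lemma dominates_reachable:
  assumes "dominates A D s v x" and "dwalk A D s P x"
  shows "\<exists>Q. dwalk A D s Q v"
proof -
  have "v \<in> set P" using assms unfolding dominates_def by blast
  then obtain P1 P2 where "P = P1 @ v # P2" by (meson split_list)
  then show ?thesis using assms(2) dwalk_split by metis
qed

lemma dominates_asym:
  assumes "dominates A D s u v" and "dominates A D s v u" and "dwalk A D s P v"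
  shows False
proof -
  have "u \<in> set P" using assms(1,3) unfolding dominates_def by blast
  then obtain P1 z P2 where P: "P = P1 @ z # P2" and z: "z \<in> {u, v}" and P1: "u \<notin> set P1" "v \<notin> set P1"
    using split_list_first_propE[of P "\<lambda>z. z \<in> {u, v}"] by (metis insertCI)
  have walk: "dwalk A D s (P1 @ [z]) z" using assms(3) P dwalk_split by metis
  show False
  proof (cases "z = u")
    case True
    then show False using walk assms(2) P1 unfolding dominates_def by auto
  next
    case False
    then show False using walk z assms(1) P1 unfolding dominates_def by auto
  qed
qed

lemma idom_exists:
  assumes "dwalk A D s P x" and "x \<noteq> s"
  shows "\<exists>v. dominates A D s v x \<and> (\<forall>u. dominates A D s u x \<and> u \<noteq> v \<longrightarrow> dominates A D s u v)"
proof -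
  have "dominates A D s s x"
    using assms(2) unfolding dominates_def dwalk_def by (metis list.set_sel(1))
  moreover have "s \<in> set P" using assms(1) unfolding dwalk_def by (metis list.set_sel(1))
  ultimately obtain P1 v P2 where P: "P = P1 @ v # P2" and v: "dominates A D s v x"
    and P2: "\<forall>z\<in>set P2. \<not> dominates A D s z x"
    using split_list_last_propE[of P "\<lambda>z. dominates A D s z x"] by metis
  have "dominates A D s u v" if u: "dominates A D s u x" "u \<noteq> v" for u
    unfolding dominates_def
  proof (intro conjI allI impI)
    fix Q assume "dwalk A D s Q v"
    moreover have "dwalk A D v (v # P2) x" using assms(1) P dwalk_split by metis
    ultimately have "u \<in> set (Q @ P2)" using u(1) dwalk_append unfolding dominates_def by metis
    then show "u \<in> set Q" using u(1) P2 by auto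
  qed (use u in simp)
  with v show ?thesis by blast
qed

lemma idom_props:
  assumes "dwalk A D s P x" and "x \<noteq> s"
  shows "dominates A D s (idom A D s x) x"
    and "dominates A D s u x \<Longrightarrow> u \<noteq> idom A D s x \<Longrightarrow> dominates A D s u (idom A D s x)"
proof -
  let ?I = "\<lambda>v. dominates A D s v x \<and> (\<forall>u. dominates A D s u x \<and> u \<noteq> v \<longrightarrow> dominates A D s u v)"
  have "\<exists>!v. ?I v"
  proof (rule ex_ex1I)
    show "\<exists>v. ?I v" using idom_exists[OF assms] .
  next
    fix v v' assume "?I v" and "?I v'"
    then show "v = v'"
      using dominates_reachable[OF _ assms(1)] dominates_asym by metis
  qed
  then have "?I (idom A D s x)" unfolding idom_def by (rule theI')
  then show "dominates A D s (idom A D s x) x"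
    and "dominates A D s u x \<Longrightarrow> u \<noteq> idom A D s x \<Longrightarrow> dominates A D s u (idom A D s x)"
    by blast+
qed

lemma idom_dominates_between:
  assumes "acyclic A" and "A \<subseteq> D \<times> D" and "dwalk A D s P x" and "x \<noteq> s"
    and "(idom A D s x, y) \<in> A\<^sup>+" and "(y, x) \<in> A\<^sup>+"
  shows "dominates A D s (idom A D s x) y"
  unfolding dominates_def
proof (intro conjI allI impI)
  let ?a = "idom A D s x"
  show "?a \<noteq> y" using assms(1,5) by (auto simp: acyclic_def)
  fix Q assume Q: "dwalk A D s Q y"
  obtain R where R: "dwalk A D y (y # R) x" using trancl_dwalk[OF assms(6,2)] by blast
  have "?a \<in> set (Q @ R)"
    using idom_props(1)[OF assms(3,4)] dwalk_append[OF Q R] unfolding dominates_def by blast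
  moreover have "?a \<notin> set R"
  proof
    assume "?a \<in> set R"
    then have "(y, ?a) \<in> A\<^sup>+" using dwalk_trancl[OF R] by blast
    with assms(1,5) show False unfolding acyclic_def by (meson trancl_trans)
  qed
  ultimately show "?a \<in> set Q" by simp
qed

lemma idom_trancl_idom_between:
  assumes "acyclic A" and "A \<subseteq> D \<times> D" and "dwalk A D s P x" and "x \<noteq> s"
    and "(idom A D s x, y) \<in> A\<^sup>+" and "(y, x) \<in> A\<^sup>+"
  shows "idom A D s x = idom A D s y \<or> (idom A D s x, idom A D s y) \<in> A\<^sup>+"
proof -
  let ?a = "idom A D s x" and ?b = "idom A D s y"
  have dom_y: "dominates A D s ?a y" using idom_dominates_between[OF assms] .
  obtain Qa where Qa: "dwalk A D s Qa ?a"
    using dominates_reachable[OF idom_props(1)[OF assms(3,4)] assms(3)] by blast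
  obtain R where "dwalk A D ?a (?a # R) y" using trancl_dwalk[OF assms(5,2)] by blast
  then have Py: "dwalk A D s (Qa @ R) y" using dwalk_append[OF Qa] by blast
  have "y \<noteq> s"
  proof
    assume "y = s"
    then have "dwalk A D s [s] y" using Py unfolding dwalk_def by (auto dest: last_in_set)
    with dom_y \<open>y = s\<close> show False unfolding dominates_def by auto
  qed
  show ?thesis
  proof (cases "?a = ?b")
    case False
    have "dominates A D s ?a ?b" using idom_props(2)[OF Py \<open>y \<noteq> s\<close> dom_y False] .
    moreover obtain Pb where Pb: "dwalk A D s Pb ?b"
      using dominates_reachable[OF idom_props(1)[OF Py \<open>y \<noteq> s\<close>] Py] by blast
    ultimately obtain P1 P2 where "Pb = P1 @ ?a # P2"
      unfolding dominates_def by (meson split_list)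
    with Pb False have walk: "dwalk A D ?a (?a # P2) ?b" and "P2 \<noteq> []"
      using dwalk_split[of A D s P1 ?a P2 ?b] unfolding dwalk_def by auto
    then have "?b \<in> set P2" unfolding dwalk_def by (metis last_ConsR last_in_set)
    with walk show ?thesis by (blast intro: dwalk_trancl)
  qed simp
qed

fun walk_weight :: "('a set \<Rightarrow> real) \<Rightarrow> 'a list \<Rightarrow> real" where
  "walk_weight w (a # b # xs) = w {a, b} + walk_weight w (b # xs)"
| "walk_weight w _ = 0"

lemma path_len_eq_walk_weight: "path_len w xs = walk_weight w xs"
proof (induction w xs rule: walk_weight.induct)
  case (1 w a b xs)
  have "path_len w (a # b # xs) = (\<Sum>i<Suc (length xs). w {(a # b # xs) ! i, (a # b # xs) ! Suc i})"
    by (simp add: path_len_def)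
  also have "\<dots> = w {a, b} + (\<Sum>i<length xs. w {(b # xs) ! i, (b # xs) ! Suc i})"
    by (subst sum.lessThan_Suc_shift) simp
  finally show ?case using 1 by (simp add: path_len_def)
qed (auto simp: path_len_def)

lemma walk_weight_append:
  "walk_weight w (xs @ y # ys) = walk_weight w (xs @ [y]) + walk_weight w (y # ys)"
  by (induction xs rule: induct_list012) auto

lemma walk_weight_nonneg:
  "\<forall>e\<in>E. 0 \<le> w e \<Longrightarrow> successively (\<lambda>a b. {a, b} \<in> E) xs \<Longrightarrow> 0 \<le> walk_weight w xs"
  by (induction xs rule: induct_list012) auto

lemma walk_shortcut_to_path:
  assumes nonneg: "\<forall>e\<in>E. 0 \<le> w e"
  shows "xs \<noteq> [] \<Longrightarrow> set xs \<subseteq> V \<Longrightarrow> successively (\<lambda>a b. {a, b} \<in> E) xs \<Longrightarrow>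
    \<exists>ys. is_path V E ys \<and> hd ys = hd xs \<and> last ys = last xs \<and> walk_weight w ys \<le> walk_weight w xs"
proof (induction xs rule: length_induct)
  case (1 xs)
  show ?case
  proof (cases "distinct xs")
    case True
    with "1.prems" show ?thesis by (auto simp: is_path_def successively_conv_nth)
  next
    case False
    then obtain as u bs cs where xs: "xs = as @ [u] @ bs @ [u] @ cs"
      using not_distinct_decomp by blast
    let ?E = "\<lambda>a b. {a, b} \<in> E"
    have loop: "successively ?E (u # bs @ [u])" and shorter: "successively ?E (as @ u # cs)"
      using "1.prems"(3) successively_append_Cons_iff[of _ as u "bs @ u # cs"]
        successively_append_Cons_iff[of _ "u # bs" u cs] successively_append_Cons_iff[of _ as u cs]
      unfolding xs by auto
    have "walk_weight w xs = walk_weight w (as @ [u]) + walk_weight w (u # bs @ [u]) + walk_weight w (u # cs)"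
      using walk_weight_append[of w as u "bs @ u # cs"] walk_weight_append[of w "u # bs" u cs]
      unfolding xs by simp
    moreover have "walk_weight w (as @ u # cs) = walk_weight w (as @ [u]) + walk_weight w (u # cs)"
      by (rule walk_weight_append)
    ultimately have le: "walk_weight w (as @ u # cs) \<le> walk_weight w xs"
      using walk_weight_nonneg[OF nonneg loop] by linarith
    have ends: "hd (as @ u # cs) = hd xs" "last (as @ u # cs) = last xs"
      unfolding xs by (simp_all add: hd_append)
    have "length (as @ u # cs) < length xs" and "set (as @ u # cs) \<subseteq> V"
      using "1.prems"(2) unfolding xs by auto
    then obtain ys where "is_path V E ys" "hd ys = hd (as @ u # cs)" "last ys = last (as @ u # cs)"
        "walk_weight w ys \<le> walk_weight w (as @ u # cs)"
      using "1.IH" shorter by blast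
    with le ends show ?thesis by force
  qed
qed

lemma is_path_successively: "is_path V E xs \<Longrightarrow> successively (\<lambda>a b. {a, b} \<in> E) xs"
  by (simp add: is_path_def successively_conv_nth)

lemma shortest_path_prefix_weight_le:
  assumes nonneg: "\<forall>e\<in>E. 0 \<le> w e"
    and P: "shortest_path V E w s t (as @ u # bs)" and Q: "shortest_path V E w s t (cs @ u # ds)"
  shows "walk_weight w (cs @ [u]) \<le> walk_weight w (as @ [u])"
proof -
  let ?W = "as @ u # ds"
  have "successively (\<lambda>a b. {a, b} \<in> E) ?W"
    using P Q successively_append_Cons_iff[of _ as u bs] successively_append_Cons_iff[of _ cs u ds]
      successively_append_Cons_iff[of _ as u ds]
    unfolding shortest_path_def by (auto dest: is_path_successively)
  moreover have "set ?W \<subseteq> V" using P Q unfolding shortest_path_def is_path_def by auto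
  ultimately obtain zs where zs: "is_path V E zs" "hd zs = hd ?W" "last zs = last ?W"
      "walk_weight w zs \<le> walk_weight w ?W"
    using walk_shortcut_to_path[OF nonneg] by blast
  moreover have "hd ?W = s" "last ?W = t"
    using P Q unfolding shortest_path_def by (auto simp: hd_append split: if_splits)
  ultimately have "walk_weight w (cs @ u # ds) \<le> walk_weight w ?W"
    using Q unfolding shortest_path_def path_len_eq_walk_weight by fastforce
  then show ?thesis
    using walk_weight_append[of w cs u ds] walk_weight_append[of w as u ds] by linarith
qed

text \<open>By shortest_path_prefix_weight_le the choice made by SOME is irrelevant
  (see sp_potential_eq).\<close>
definition sp_potential :: "'a set \<Rightarrow> 'a set set \<Rightarrow> ('a set \<Rightarrow> real) \<Rightarrow> 'a \<Rightarrow> 'a \<Rightarrow> 'a \<Rightarrow> real" where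
  "sp_potential V E w s t u =
     (SOME r. \<exists>as bs. shortest_path V E w s t (as @ u # bs) \<and> r = walk_weight w (as @ [u]))"

lemma sp_potential_eq:
  assumes "\<forall>e\<in>E. 0 \<le> w e" and "shortest_path V E w s t (as @ u # bs)"
  shows "sp_potential V E w s t u = walk_weight w (as @ [u])"
proof -
  let ?R = "\<lambda>r. \<exists>as bs. shortest_path V E w s t (as @ u # bs) \<and> r = walk_weight w (as @ [u])"
  have "?R (sp_potential V E w s t u)"
    unfolding sp_potential_def by (rule someI_ex) (use assms(2) in blast)
  then show ?thesis
    using shortest_path_prefix_weight_le[OF assms(1)] assms(2) by (metis order_antisym)
qed

lemma Darcs_split:
  assumes "(u, v) \<in> Darcs V E w s t"
  obtains as bs where "shortest_path V E w s t (as @ u # v # bs)"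
proof -
  obtain xs i where xs: "shortest_path V E w s t xs" "Suc i < length xs" "u = xs ! i" "v = xs ! Suc i"
    using assms unfolding Darcs_def by blast
  then have "xs = take i xs @ u # v # drop (Suc (Suc i)) xs"
    by (metis Cons_nth_drop_Suc Suc_lessD append_take_drop_id)
  with xs(1) show ?thesis using that by metis
qed

lemma sp_potential_less:
  assumes pos: "\<forall>e\<in>E. 0 < w e" and "(u, v) \<in> Darcs V E w s t"
  shows "sp_potential V E w s t u < sp_potential V E w s t v"
proof -
  have nonneg: "\<forall>e\<in>E. 0 \<le> w e" using pos by (simp add: less_imp_le)
  obtain as bs where P: "shortest_path V E w s t (as @ u # v # bs)"
    using assms(2) by (rule Darcs_split)
  then have "{u, v} \<in> E"
    using successively_append_Cons_iff[of _ as u "v # bs"]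
    unfolding shortest_path_def by (auto dest: is_path_successively)
  moreover have "sp_potential V E w s t u = walk_weight w (as @ [u])"
    using sp_potential_eq[OF nonneg P] .
  moreover have "sp_potential V E w s t v = walk_weight w (as @ [u]) + w {u, v}"
    using sp_potential_eq[OF nonneg, where as = "as @ [u]" and u = v and bs = bs] P walk_weight_append[of w as u "[v]"] by simp
  ultimately show ?thesis using pos by fastforce
qed

lemma acyclic_Darcs: "\<forall>e\<in>E. 0 < w e \<Longrightarrow> acyclic (Darcs V E w s t)"
  by (rule acyclicI_order[where f = "\<lambda>u. - sp_potential V E w s t u"]) (simp add: sp_potential_less)

lemma Darcs_subset: "Darcs V E w s t \<subseteq> DV V E w s t \<times> DV V E w s t"
  unfolding Darcs_def DV_def by auto

lemma dpath_iff_dwalk: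
  "dpath V E w s t P \<and> hd P = u \<and> last P = v \<longleftrightarrow> dwalk (Darcs V E w s t) (DV V E w s t) u P v"
  by (auto simp: dpath_def dwalk_def successively_conv_nth)

lemma Is_eq_idom: "Is V E w s t = idom (Darcs V E w s t) (DV V E w s t) s"
proof -
  have "sdom V E w s t = dominates (Darcs V E w s t) (DV V E w s t) s"
    by (intro ext) (simp add: sdom_def dominates_def flip: dpath_iff_dwalk)
  then show ?thesis by (intro ext) (simp add: Is_def idom_def)
qed

lemma DV_reachable:
  assumes "x \<in> DV V E w s t"
  shows "\<exists>P. dwalk (Darcs V E w s t) (DV V E w s t) s P x"
proof -
  obtain xs where xs: "shortest_path V E w s t xs" "x \<in> set xs"
    using assms unfolding DV_def by blast
  then have "dwalk (Darcs V E w s t) (DV V E w s t) s xs t"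
    unfolding dwalk_def successively_conv_nth shortest_path_def DV_def Darcs_def
    by (auto simp: is_path_def)
  moreover obtain as bs where "xs = as @ x # bs" using xs(2) by (meson split_list)
  ultimately show ?thesis using dwalk_split by metis
qed

theorem lemma3:
  fixes V :: "'a set" and E :: "'a set set" and w :: "'a set \<Rightarrow> real" and s t x y :: 'a
  assumes "simple_graph V E"
    and "connected_graph V E"
    and "\<forall>e\<in>E. w e > 0"
    and "s \<in> V" and "t \<in> V"
    and "x \<in> DV V E w s t" and "x \<noteq> s"
    and "y \<in> Cset V E w s t x"
  shows "anc_eq V E w s t (Is V E w s t x) (Is V E w s t y)"
proof -
  let ?A = "Darcs V E w s t" and ?D = "DV V E w s t"
  obtain P where P: "dwalk ?A ?D s P x" using DV_reachable[OF assms(6)] by blast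
  have "(idom ?A ?D s x, y) \<in> ?A\<^sup>+" and "(y, x) \<in> ?A\<^sup>+"
    using assms(8) unfolding Cset_def anc_def Is_eq_idom by auto
  then show ?thesis
    using idom_trancl_idom_between[OF acyclic_Darcs[OF assms(3)] Darcs_subset P assms(7)]
    unfolding anc_eq_def anc_def Is_eq_idom by blast
qed

end
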